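(* Let $n\geq 4$ and $l=2^{n-2}-1$. Let $\Lambda$ be an $\mathcal{O}$-order with split semisimple $K$-span whose decomposition matrix is $D_0$; let $V_1,\dots,V_{6+l}$ be the simple $K\otimes\Lambda$-modules indexed according to the rows of $D_0$, and $P_1,P_2,P_3$ the projective indecomposable $\Lambda$-modules indexed according to the columns of $D_0$. Let $\varphi$ be an isometry of $K_0(K\otimes\Lambda)$ mapping the lattice $L=\langle [K\otimes P]\mid P \text{ a projective }\Lambda\text{-module}\rangle_{\mathbb Z}$ onto itself. Then $\varphi$ is a signed permutation of $\{[V_1],\dots,[V_{6+l}]\}$ lying in $$\langle \pm\mathrm{id},\ (2,3)(5,6),\ (-1,-4)(2,3)(-5)(-6),\ (2,4)(-1,-3)(-6)\rangle\cdot\mathrm{Sym}(\{7,\dots,6+l\}).$$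
   Context: $\mathcal{O}$ is a complete discrete valuation ring of characteristic $0$ with fraction field $K$ and algebraically closed residue field $k$ of characteristic $2$. $D_0$ is the $(6+l)\times3$ matrix with rows, in order, $(1,0,0),(0,1,0),(0,0,1),(1,1,1),(1,1,0),(1,0,1)$ followed by $l$ rows $(0,1,1)$; "decomposition matrix $D_0$" means the multiplicity of the $j$-th simple $k\otimes\Lambda$-module in the reduction of a full lattice in $V_i$ is $(D_0)_{ij}$, equivalently $[K\otimes P_j]=\sum_i (D_0)_{ij}[V_i]$. $K_0(K\otimes\Lambda)$ is the Grothendieck group, with the bilinear form for which $[V_1],\dots,[V_{6+l}]$ is an orthonormal basis. Signed permutation notation: a signed cycle $(i_1,\dots,i_k)$ with $i_j\in\pm\{1,\dots,6+l\}$ sends $[V_{|i_j|}]$ to $\operatorname{sgn}(i_{j+1})[V_{|i_{j+1}|}]$ (indices mod $k$), and fixes all $[V_m]$ with $m$ not occurring; e.g. $(-5)$ sends $[V_5]\mapsto-[V_5]$. $\mathrm{Sym}(\{7,\dots,6+l\})$ acts by permuting $[V_7],\dots,[V_{6+l}]$ without signs. *)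

theory Defs
  imports "HOL-Combinatorics.Permutations" "HOL-Library.Function_Algebras"
begin

text \<open>K_0(K \<otimes> Lambda) with the basis [V_1],...,[V_N] is modelled as the integer
  vectors v :: nat \<Rightarrow> int supported on {1..N}; v i is the coefficient of [V_i].\<close>

definition K0 :: "nat \<Rightarrow> (nat \<Rightarrow> int) set" where
  "K0 N = {v. \<forall>i. i \<notin> {1..N} \<longrightarrow> v i = 0}"

definition form :: "nat \<Rightarrow> (nat \<Rightarrow> int) \<Rightarrow> (nat \<Rightarrow> int) \<Rightarrow> int" where
  "form N v w = (\<Sum>i\<in>{1..N}. v i * w i)"

definition isometry :: "nat \<Rightarrow> ((nat \<Rightarrow> int) \<Rightarrow> (nat \<Rightarrow> int)) \<Rightarrow> bool" where
  "isometry N \<phi> \<longleftrightarrow> bij_betw \<phi> (K0 N) (K0 N)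
     \<and> (\<forall>v\<in>K0 N. \<forall>w\<in>K0 N. \<phi> (v + w) = \<phi> v + \<phi> w)
     \<and> (\<forall>v\<in>K0 N. \<forall>w\<in>K0 N. form N (\<phi> v) (\<phi> w) = form N v w)"

definition D0 :: "nat \<Rightarrow> nat \<Rightarrow> nat \<Rightarrow> int" where
  "D0 l i j = (if j \<notin> {1..3} then 0 else
     if i = 1 then (if j = 1 then 1 else 0) else
     if i = 2 then (if j = 2 then 1 else 0) else
     if i = 3 then (if j = 3 then 1 else 0) else
     if i = 4 then 1 else
     if i = 5 then (if j = 3 then 0 else 1) else
     if i = 6 then (if j = 2 then 0 else 1) else
     if 7 \<le> i \<and> i \<le> 6 + l then (if j = 1 then 0 else 1) else 0)"

text \<open>[K \<otimes> P_j] = sum_i (D_0)_{ij} [V_i].\<close>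
definition KP :: "nat \<Rightarrow> nat \<Rightarrow> (nat \<Rightarrow> int)" where
  "KP l j = (\<lambda>i. D0 l i j)"

text \<open>The lattice L spanned by the classes [K \<otimes> P] of projective Lambda-modules;
  every projective module is a direct sum of copies of P_1, P_2, P_3, so L is the
  Z-span of [K \<otimes> P_1], [K \<otimes> P_2], [K \<otimes> P_3].\<close>
definition proj_lattice :: "nat \<Rightarrow> (nat \<Rightarrow> int) set" where
  "proj_lattice l = {v. \<exists>c :: nat \<Rightarrow> int. v = (\<Sum>j\<in>{1..3}. (\<lambda>i. c j * KP l j i))}"

text \<open>Signed cycle (i_1,...,i_k), i_j nonzero integers: sends [V_|i_j|] to
  sgn(i_{j+1}) [V_|i_{j+1}|] (indices mod k), fixes the other [V_m].
  On coefficient vectors: the coefficient at |i_j| becomes sgn(i_j) times the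
  old coefficient at |i_{j-1}|.\<close>
definition signed_cycle :: "int list \<Rightarrow> (nat \<Rightarrow> int) \<Rightarrow> (nat \<Rightarrow> int)" where
  "signed_cycle c v = (\<lambda>m.
     if (\<exists>j<length c. nat \<bar>c ! j\<bar> = m)
     then (let j = (THE j. j < length c \<and> nat \<bar>c ! j\<bar> = m)
           in sgn (c ! j) * v (nat \<bar>c ! ((j + length c - 1) mod length c)\<bar>))
     else v m)"

definition signed_perm :: "int list list \<Rightarrow> (nat \<Rightarrow> int) \<Rightarrow> (nat \<Rightarrow> int)" where
  "signed_perm cs = foldr (\<lambda>c f. signed_cycle c \<circ> f) cs id"

definition gens :: "((nat \<Rightarrow> int) \<Rightarrow> (nat \<Rightarrow> int)) set" where
  "gens = {uminus,
           signed_perm [[2,3],[5,6]],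
           signed_perm [[-1,-4],[2,3],[-5],[-6]],
           signed_perm [[2,4],[-1,-3],[-6]]}"

text \<open>The group generated by gens (a finite group, so the generated monoid suffices).\<close>
inductive_set gen_group :: "((nat \<Rightarrow> int) \<Rightarrow> (nat \<Rightarrow> int)) set" where
  gen_id: "id \<in> gen_group"
| gen_step: "g \<in> gen_group \<Longrightarrow> h \<in> gens \<Longrightarrow> h \<circ> g \<in> gen_group"

text \<open>Action of a permutation pi of indices: [V_m] goes to [V_{pi m}].\<close>
definition perm_action :: "(nat \<Rightarrow> nat) \<Rightarrow> (nat \<Rightarrow> int) \<Rightarrow> (nat \<Rightarrow> int)" where
  "perm_action \<pi> v = v \<circ> inv \<pi>"

end

theory Submission
  imports Defs
begin

text \<open>An isometry of the standard lattice \<int>^N is a signed permutation of the basis [V_i].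
  Applied to the classes [K \<otimes> P_k] it permutes the rows of D_0 up to sign, and the result must
  again satisfy the relations that hold for every vector w of L: w_4 = w_1 + w_2 + w_3,
  w_5 = w_1 + w_2, w_6 = w_1 + w_3 and w_i = w_2 + w_3 for i \<ge> 7. The rows (0,1,1) of indices
  \<ge> 7 are the only rows of D_0 that agree up to sign with another row, so these indices are
  permuted among themselves with a common sign. What remains is a signed permutation of the
  first six rows solving the relations; a finite search shows there are exactly sixteen, and
  each is a word in the given generators.\<close>

lemma sum_squares_eq_1_int:
  fixes x :: "'a \<Rightarrow> int"
  assumes "finite A" and "(\<Sum>i\<in>A. x i * x i) = 1"
  obtains k where "k \<in> A" and "x k = 1 \<or> x k = -1" and "\<forall>i\<in>A - {k}. x i = 0"
proof -
  obtain k where k: "k \<in> A" "x k \<noteq> 0"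
    using assms(2) by (metis (no_types, lifting) sum.neutral mult_zero_left zero_neq_one)
  have split: "(\<Sum>i\<in>A. x i * x i) = x k * x k + (\<Sum>i\<in>A - {k}. x i * x i)"
    using assms(1) k(1) by (simp add: sum.remove)
  have "(\<Sum>i\<in>A - {k}. x i * x i) \<ge> 0" by (simp add: sum_nonneg)
  moreover have "x k * x k \<ge> 1"
    using k(2) by (smt (verit) mult_le_cancel_right1 mult_minus_left zero_less_mult_iff)
  ultimately have "x k * x k = 1" and rest: "(\<Sum>i\<in>A - {k}. x i * x i) = 0"
    using split assms(2) by linarith+
  then have "x k = 1 \<or> x k = -1" by (metis zmult_eq_1_iff)
  moreover have "\<forall>i\<in>A - {k}. x i = 0"
    using rest assms(1) sum_nonneg_eq_0_iff[of "A - {k}" "\<lambda>i. x i * x i"] by simp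
  ultimately show thesis using that k(1) by blast
qed

definition unit_vec :: "nat \<Rightarrow> nat \<Rightarrow> int" where
  "unit_vec j = (\<lambda>i. if i = j then 1 else 0)"

lemma unit_vec_in_K0: "j \<in> {1..N} \<Longrightarrow> unit_vec j \<in> K0 N"
  unfolding K0_def unit_vec_def by auto

lemma form_unit_vec: "j \<in> {1..N} \<Longrightarrow> form N w (unit_vec j) = w j"
  unfolding form_def unit_vec_def by (simp add: if_distrib cong: if_cong)

text \<open>The preimage u of the unit vector e_j has norm 1, hence is \<plusminus>e_k, and then
  the j-th coordinate of \<phi> v is the form (\<phi> v, \<phi> u) = (v, u) = \<plusminus>v k.\<close>
lemma isometry_coordinate:
  assumes iso: "isometry N \<phi>" and j: "j \<in> {1..N}"
  obtains k u where "k \<in> {1..N}" and "u \<in> K0 N" and "\<phi> u = unit_vec j"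
    and "u k = 1 \<or> u k = -1" and "\<forall>v\<in>K0 N. \<phi> v j = u k * v k"
proof -
  have bij: "bij_betw \<phi> (K0 N) (K0 N)"
    and form_eq: "\<And>v w. v \<in> K0 N \<Longrightarrow> w \<in> K0 N \<Longrightarrow> form N (\<phi> v) (\<phi> w) = form N v w"
    using iso unfolding isometry_def by auto
  obtain u where u: "u \<in> K0 N" "\<phi> u = unit_vec j"
    using bij unit_vec_in_K0[OF j] by (metis bij_betw_iff_bijections)
  have "form N u u = 1"
    using form_eq[OF u(1) u(1)] u(2) form_unit_vec[OF j] by (simp add: unit_vec_def)
  then obtain k where k: "k \<in> {1..N}" "u k = 1 \<or> u k = -1" "\<forall>i\<in>{1..N} - {k}. u i = 0"
    using sum_squares_eq_1_int[of "{1..N}" u] unfolding form_def by auto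
  have "\<phi> v j = u k * v k" if v: "v \<in> K0 N" for v
  proof -
    have "\<phi> v j = form N v u"
      using form_eq[OF v u(1)] u(2) form_unit_vec[OF j] by simp
    also have "\<dots> = (\<Sum>i\<in>{1..N}. if i = k then v k * u k else 0)"
      unfolding form_def by (rule sum.cong) (use k(3) in auto)
    finally show ?thesis using k(1) by simp
  qed
  then show thesis using that k u by blast
qed

lemma isometry_signed_permutation:
  assumes iso: "isometry N \<phi>"
  obtains \<tau> s where "bij_betw \<tau> {1..N} {1..N}" and "\<forall>j\<in>{1..N}. s j = 1 \<or> s j = -1"
    and "\<forall>v\<in>K0 N. \<forall>j\<in>{1..N}. \<phi> v j = s j * v (\<tau> j)"
proof -
  have "\<exists>k w. k \<in> {1..N} \<and> w \<in> K0 N \<and> \<phi> w = unit_vec j \<and> (w k = 1 \<or> w k = -1)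
      \<and> (\<forall>v\<in>K0 N. \<phi> v j = w k * v k)" if "j \<in> {1..N}" for j
    by (rule isometry_coordinate[OF iso that]) blast
  then obtain \<tau> u where P: "\<And>j. j \<in> {1..N} \<Longrightarrow> \<tau> j \<in> {1..N} \<and> u j \<in> K0 N \<and> \<phi> (u j) = unit_vec j
      \<and> (u j (\<tau> j) = 1 \<or> u j (\<tau> j) = -1) \<and> (\<forall>v\<in>K0 N. \<phi> v j = u j (\<tau> j) * v (\<tau> j))"
    by metis
  have "inj_on \<tau> {1..N}"
  proof (rule inj_onI, rule ccontr)
    fix i j assume i: "i \<in> {1..N}" and j: "j \<in> {1..N}" and eq: "\<tau> i = \<tau> j" and "i \<noteq> j"
    then have "unit_vec i j = 0" by (simp add: unit_vec_def)
    moreover have "unit_vec i j = u j (\<tau> j) * u i (\<tau> i)"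
      using P[OF i] P[OF j] eq by metis
    ultimately show False using P[OF i] P[OF j] by auto
  qed
  moreover have "\<tau> ` {1..N} \<subseteq> {1..N}" using P by blast
  ultimately have "bij_betw \<tau> {1..N} {1..N}"
    by (simp add: bij_betw_def endo_inj_surj)
  then show thesis using that[of \<tau> "\<lambda>j. u j (\<tau> j)"] P by blast
qed

lemma isometry_K0: "isometry N \<phi> \<Longrightarrow> v \<in> K0 N \<Longrightarrow> \<phi> v \<in> K0 N"
  unfolding isometry_def bij_betw_def by blast

definition lattice_rels :: "nat \<Rightarrow> (nat \<Rightarrow> int) \<Rightarrow> bool" where
  "lattice_rels l w \<longleftrightarrow> w 4 = w 1 + w 2 + w 3 \<and> w 5 = w 1 + w 2 \<and> w 6 = w 1 + w 3
     \<and> (\<forall>i\<in>{7..6 + l}. w i = w 2 + w 3)"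

lemma sum_1_to_3: "(\<Sum>j\<in>{1..3::nat}. f j) = f 1 + f 2 + f 3"
proof -
  have "{1..3::nat} = {1, 2, 3}" by auto
  then show ?thesis by (simp add: add.assoc)
qed

lemma proj_lattice_rels:
  assumes "w \<in> proj_lattice l"
  shows "lattice_rels l w"
proof -
  obtain c where c: "w = (\<Sum>j\<in>{1..3}. (\<lambda>i. c j * KP l j i))"
    using assms unfolding proj_lattice_def by blast
  have "w i = c 1 * D0 l i 1 + c 2 * D0 l i 2 + c 3 * D0 l i 3" for i
    unfolding c sum_1_to_3 by (simp add: KP_def)
  then show ?thesis unfolding lattice_rels_def by (auto simp: D0_def)
qed

lemma KP_in_proj_lattice: "k \<in> {1..3} \<Longrightarrow> KP l k \<in> proj_lattice l"
  unfolding proj_lattice_def mem_Collect_eq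
  apply (rule exI[of _ "\<lambda>j. if j = k then 1 else 0"])
  apply (simp only: sum_1_to_3)
  apply (auto simp: fun_eq_iff KP_def D0_def)
  done

lemma KP_in_K0: "KP l k \<in> K0 (6 + l)"
  unfolding K0_def KP_def D0_def by auto

lemma signed_perm_column_rels:
  assumes "\<forall>v\<in>K0 (6 + l). \<forall>j\<in>{1..6 + l}. \<phi> v j = s j * v (\<tau> j)"
    and "\<phi> ` proj_lattice l \<subseteq> proj_lattice l" and k: "k \<in> {1..3}"
  shows "lattice_rels l (\<lambda>i. s i * D0 l (\<tau> i) k)"
proof -
  have "lattice_rels l (\<phi> (KP l k))"
    using assms(2) KP_in_proj_lattice[OF k] proj_lattice_rels by blast
  moreover have "\<phi> (KP l k) i = s i * D0 l (\<tau> i) k" if "i \<in> {1..6 + l}" for i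
    using assms(1) KP_in_K0[of l k] that by (simp add: KP_def)
  ultimately show ?thesis unfolding lattice_rels_def by auto
qed

lemma D0_rows_eq_up_to_sign:
  assumes "p \<in> {1..6 + l}" "q \<in> {1..6 + l}" "p \<noteq> q"
    and "s = 1 \<or> s = -1" "s' = 1 \<or> s' = (-1::int)"
    and "\<forall>k\<in>{1..3}. s * D0 l p k = s' * D0 l q k"
  shows "7 \<le> p \<and> 7 \<le> q \<and> s = s'"
proof -
  have rows: "x = 1 \<or> x = 2 \<or> x = 3 \<or> x = 4 \<or> x = 5 \<or> x = 6 \<or> (7 \<le> x \<and> x \<le> 6 + l)"
    if "x \<in> {1..6 + l}" for x using that by auto
  have "s * D0 l p 1 = s' * D0 l q 1" "s * D0 l p 2 = s' * D0 l q 2" "s * D0 l p 3 = s' * D0 l q 3"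
    using assms(6) by auto
  then show ?thesis
    using rows[OF assms(1)] rows[OF assms(2)] assms(3-5) by (elim disjE; auto simp: D0_def)
qed

text \<open>Two tail rows of D_0 coincide, and no other row of D_0 agrees with a different row up to sign;
  since l \<ge> 2, every tail index has a partner, so the tail block is mapped to itself with a common sign.\<close>
lemma tail_block_preserved:
  assumes bij: "bij_betw \<tau> {1..6 + l} {1..6 + l}" and "2 \<le> l"
    and signs: "\<forall>j\<in>{1..6 + l}. s j = 1 \<or> s j = -1"
    and rels: "\<forall>k\<in>{1..3}. lattice_rels l (\<lambda>i. s i * D0 l (\<tau> i) k)"
  shows "\<tau> ` {7..6 + l} = {7..6 + l}" and "\<forall>i\<in>{7..6 + l}. s i = s 7"
proof -
  have inj: "inj_on \<tau> {1..6 + l}" and into: "\<And>j. j \<in> {1..6 + l} \<Longrightarrow> \<tau> j \<in> {1..6 + l}"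
    using bij by (auto simp: bij_betw_def)
  have tail: "7 \<le> \<tau> i \<and> s i = s 7" if i: "i \<in> {7..6 + l}" for i
  proof -
    define i' where "i' = (if i = 7 then 8 else (7::nat))"
    have i': "i' \<in> {7..6 + l}" "i' \<noteq> i" using i \<open>2 \<le> l\<close> unfolding i'_def by auto
    have "\<tau> i \<noteq> \<tau> i'" using inj i i' by (auto dest: inj_onD)
    moreover have "\<forall>k\<in>{1..3}. s i * D0 l (\<tau> i) k = s i' * D0 l (\<tau> i') k"
      using rels i i' unfolding lattice_rels_def by auto
    ultimately have "7 \<le> \<tau> i \<and> 7 \<le> \<tau> i' \<and> s i = s i'"
      using D0_rows_eq_up_to_sign[of "\<tau> i" l "\<tau> i'" "s i" "s i'"] into[of i] into[of i'] signs i i'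
      by auto
    then show ?thesis unfolding i'_def by (auto split: if_splits)
  qed
  have "\<tau> ` {7..6 + l} \<subseteq> {7..6 + l}" using tail into by force
  moreover have "inj_on \<tau> {7..6 + l}" using inj by (rule inj_on_subset) auto
  ultimately show "\<tau> ` {7..6 + l} = {7..6 + l}" by (simp add: endo_inj_surj)
  show "\<forall>i\<in>{7..6 + l}. s i = s 7" using tail by blast
qed

lemma head_block_preserved:
  fixes \<tau> :: "nat \<Rightarrow> nat"
  assumes "6 \<le> N" and bij: "bij_betw \<tau> {1..N} {1..N}" and tail: "\<tau> ` {7..N} = {7..N}"
  shows "bij_betw \<tau> {1..6} {1..6}"
proof -
  have "bij_betw \<tau> {7..N} {7..N}"
    by (rule bij_betw_subset[OF bij _ tail]) auto
  with bij have "bij_betw \<tau> ({1..N} - {7..N}) ({1..N} - {7..N})"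
    by (rule bij_betw_DiffI) auto
  moreover have "{1..N} - {7..N} = {1..6}" using \<open>6 \<le> N\<close> by auto
  ultimately show ?thesis by simp
qed

lemma signed_cycle_single:
  "signed_cycle [a] v = (\<lambda>m. if m = nat \<bar>a\<bar> then sgn a * v m else v m)"
proof -
  have "(THE j. j = 0 \<and> nat \<bar>[a] ! j\<bar> = nat \<bar>a\<bar>) = 0" by (rule the_equality) auto
  then show ?thesis unfolding signed_cycle_def by (auto simp: fun_eq_iff Let_def)
qed

lemma signed_cycle_pair:
  assumes "nat \<bar>a\<bar> \<noteq> nat \<bar>b\<bar>"
  shows "signed_cycle [a, b] v = (\<lambda>m. if m = nat \<bar>a\<bar> then sgn a * v (nat \<bar>b\<bar>)
     else if m = nat \<bar>b\<bar> then sgn b * v (nat \<bar>a\<bar>) else v m)"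
proof -
  have occurs: "(\<exists>j<length [a, b]. nat \<bar>[a, b] ! j\<bar> = m) \<longleftrightarrow> m = nat \<bar>a\<bar> \<or> m = nat \<bar>b\<bar>" for m
    by (auto simp: less_Suc_eq numeral_2_eq_2)
  have "(THE j. j < length [a, b] \<and> nat \<bar>[a, b] ! j\<bar> = nat \<bar>a\<bar>) = 0"
    and "(THE j. j < length [a, b] \<and> nat \<bar>[a, b] ! j\<bar> = nat \<bar>b\<bar>) = 1"
    by (rule the_equality; use assms in \<open>auto simp: less_Suc_eq numeral_2_eq_2\<close>)+
  then show ?thesis
    unfolding signed_cycle_def occurs using assms by (auto simp: fun_eq_iff Let_def)
qed

text \<open>(ps, es, c) encodes the signed permutation with coordinates w_i \<mapsto> es_i w_{ps_i} for
  i \<le> 6 (lists indexed from 0) and w_i \<mapsto> c w_i for all other i.\<close>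
type_synonym head_sperm = "nat list \<times> int list \<times> int"

fun head_action :: "head_sperm \<Rightarrow> (nat \<Rightarrow> int) \<Rightarrow> (nat \<Rightarrow> int)" where
  "head_action (ps, es, c) w = (\<lambda>i. if 1 \<le> i \<and> i \<le> 6 then es ! (i - 1) * w (ps ! (i - 1)) else c * w i)"

fun head_mult :: "head_sperm \<Rightarrow> head_sperm \<Rightarrow> head_sperm" where
  "head_mult (ps, es, c) (qs, fs, d) =
     (map (\<lambda>p. qs ! (p - 1)) ps, map (\<lambda>k. es ! k * fs ! (ps ! k - 1)) [0..<6], c * d)"

definition head_one :: head_sperm where
  "head_one = ([1, 2, 3, 4, 5, 6], [1, 1, 1, 1, 1, 1], 1)"

lemma head_action_mult:
  assumes "length ps = 6" and "set ps \<subseteq> {1..6}"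
  shows "head_action (ps, es, c) \<circ> head_action y = head_action (head_mult (ps, es, c) y)"
proof -
  obtain qs fs d where y: "y = (qs, fs, d)" by (cases y)
  have "ps ! (i - 1) \<in> {1..6}" if "1 \<le> i" "i \<le> 6" for i
  proof -
    have "ps ! (i - 1) \<in> set ps" using assms(1) that by simp
    then show ?thesis using assms(2) by blast
  qed
  then show ?thesis using assms(1) unfolding y by (auto simp: fun_eq_iff)
qed

lemma head_action_one: "head_action head_one = id"
  by (auto simp: head_one_def fun_eq_iff numeral_eq_Suc le_Suc_eq)

definition head_gens :: "head_sperm list" where
  "head_gens = [([1, 2, 3, 4, 5, 6], [-1, -1, -1, -1, -1, -1], -1),
                ([1, 3, 2, 4, 6, 5], [1, 1, 1, 1, 1, 1], 1),
                ([4, 3, 2, 1, 5, 6], [-1, 1, 1, -1, -1, -1], 1),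
                ([3, 4, 1, 2, 5, 6], [-1, 1, -1, 1, 1, -1], 1)]"

lemma head_gens_action: "map head_action head_gens =
   [uminus, signed_perm [[2,3],[5,6]], signed_perm [[-1,-4],[2,3],[-5],[-6]], signed_perm [[2,4],[-1,-3],[-6]]]"
  unfolding head_gens_def signed_perm_def
  by (auto simp: signed_cycle_pair signed_cycle_single fun_eq_iff numeral_eq_Suc le_Suc_eq)

lemma head_word_in_gen_group:
  assumes "set w \<subseteq> set head_gens"
  shows "head_action (foldr head_mult w head_one) \<in> gen_group"
  using assms
proof (induction w)
  case Nil
  show ?case using gen_id head_action_one by (metis foldr_Nil id_apply)
next
  case (Cons g w)
  obtain ps es c where g: "g = (ps, es, c)" by (cases g)
  have len: "length ps = 6" and perm: "set ps \<subseteq> {1..6}" and gen: "head_action g \<in> gens"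
    using Cons.prems head_gens_action unfolding g head_gens_def gens_def by auto
  have "head_action g \<circ> head_action (foldr head_mult w head_one) \<in> gen_group"
    using gen_step[OF _ gen] Cons by simp
  then show ?case using head_action_mult[OF len perm] by (simp add: g)
qed

text \<open>The word [i_1, ..., i_k] stands for the product g_{i_1} \<circ> ... \<circ> g_{i_k} of the
  generators listed in head_gens.\<close>
definition head_words :: "nat list list" where
  "head_words = [[], [0], [1], [2], [3], [1, 0], [2, 0], [3, 0], [2, 1], [3, 1], [3, 2], [1, 3],
     [2, 1, 0], [3, 1, 0], [3, 2, 0], [1, 3, 0]]"

definition head_automorphisms :: "head_sperm list" where
  "head_automorphisms = map (\<lambda>w. foldr head_mult (map ((!) head_gens) w) head_one) head_words"

lemma head_automorphisms_in_gen_group: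
  assumes "x \<in> set head_automorphisms"
  shows "head_action x \<in> gen_group"
proof -
  obtain w where w: "w \<in> set head_words" and x: "x = foldr head_mult (map ((!) head_gens) w) head_one"
    using assms unfolding head_automorphisms_def set_map by blast
  have "set w \<subseteq> {..<length head_gens}"
    using w by (auto simp: head_words_def head_gens_def)
  then have "set (map ((!) head_gens) w) \<subseteq> set head_gens" by auto
  then show ?thesis unfolding x by (rule head_word_in_gen_group)
qed

lemma head_automorphisms_eq: "head_automorphisms =
  [([1,2,3,4,5,6], [1,1,1,1,1,1], 1), ([1,2,3,4,5,6], [-1,-1,-1,-1,-1,-1], -1),
   ([1,3,2,4,6,5], [1,1,1,1,1,1], 1), ([4,3,2,1,5,6], [-1,1,1,-1,-1,-1], 1),
   ([3,4,1,2,5,6], [-1,1,-1,1,1,-1], 1), ([1,3,2,4,6,5], [-1,-1,-1,-1,-1,-1], -1),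
   ([4,3,2,1,5,6], [1,-1,-1,1,1,1], -1), ([3,4,1,2,5,6], [1,-1,1,-1,-1,1], -1),
   ([4,2,3,1,6,5], [-1,1,1,-1,-1,-1], 1), ([2,4,1,3,6,5], [-1,1,-1,1,1,-1], 1),
   ([2,1,4,3,5,6], [-1,-1,1,1,-1,1], 1), ([3,1,4,2,6,5], [-1,-1,1,1,-1,1], 1),
   ([4,2,3,1,6,5], [1,-1,-1,1,1,1], -1), ([2,4,1,3,6,5], [1,-1,1,-1,-1,1], -1),
   ([2,1,4,3,5,6], [1,1,-1,-1,1,-1], -1), ([3,1,4,2,6,5], [1,1,-1,-1,1,-1], -1)]"
  by (simp add: head_automorphisms_def head_words_def head_gens_def head_one_def upt_rec)

lemma in_1_to_6_cases:
  "a \<in> {1..6::nat} \<Longrightarrow> (a = 1 \<Longrightarrow> P) \<Longrightarrow> (a = 2 \<Longrightarrow> P) \<Longrightarrow> (a = 3 \<Longrightarrow> P) \<Longrightarrow>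
   (a = 4 \<Longrightarrow> P) \<Longrightarrow> (a = 5 \<Longrightarrow> P) \<Longrightarrow> (a = 6 \<Longrightarrow> P) \<Longrightarrow> P"
  by (cases a; auto simp: numeral_eq_Suc le_Suc_eq)

lemma map_upt_1_7: "map f [1..<7] = [f 1, f 2, f 3, f 4, f 5, f 6]"
  by (simp add: upt_conv_Cons del: One_nat_def)

lemma D0_head_rows:
  "D0 l 1 1 = 1" "D0 l 1 2 = 0" "D0 l 1 3 = 0" "D0 l 2 1 = 0" "D0 l 2 2 = 1" "D0 l 2 3 = 0"
  "D0 l 3 1 = 0" "D0 l 3 2 = 0" "D0 l 3 3 = 1" "D0 l 4 1 = 1" "D0 l 4 2 = 1" "D0 l 4 3 = 1"
  "D0 l 5 1 = 1" "D0 l 5 2 = 1" "D0 l 5 3 = 0" "D0 l 6 1 = 1" "D0 l 6 2 = 0" "D0 l 6 3 = 1"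
  by (simp_all add: D0_def)

text \<open>The finite search branches first on \<tau> 2, \<tau> 3 and their signs: the tail relation
  w_7 = w_2 + w_3, where w_7 is the row (0,1,1) with sign s 7, leaves only eight of these cases,
  and every later branch is closed by the relation it completes.\<close>
lemma head_classification:
  fixes \<tau> :: "nat \<Rightarrow> nat" and s :: "nat \<Rightarrow> int"
  assumes head: "bij_betw \<tau> {1..6} {1..6}"
    and signs: "\<forall>j\<in>{1..7}. s j = 1 \<or> s j = -1" and tail: "\<tau> 7 \<in> {7..6 + l}"
    and rels: "\<forall>k\<in>{1..3}. lattice_rels l (\<lambda>i. s i * D0 l (\<tau> i) k)"
  shows "(map \<tau> [1..<7], map s [1..<7], s 7) \<in> set head_automorphisms"
proof -
  have h: "\<tau> 1 \<in> {1..6}" "\<tau> 2 \<in> {1..6}" "\<tau> 3 \<in> {1..6}" "\<tau> 4 \<in> {1..6}" "\<tau> 5 \<in> {1..6}" "\<tau> 6 \<in> {1..6}"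
    using bij_betw_apply[OF head] by auto
  have sg: "s 1 = 1 \<or> s 1 = -1" "s 2 = 1 \<or> s 2 = -1" "s 3 = 1 \<or> s 3 = -1" "s 4 = 1 \<or> s 4 = -1"
    "s 5 = 1 \<or> s 5 = -1" "s 6 = 1 \<or> s 6 = -1" "s 7 = 1 \<or> s 7 = -1"
    using signs by auto
  have dist: "distinct [\<tau> 1, \<tau> 2, \<tau> 3, \<tau> 4, \<tau> 5, \<tau> 6]"
    using bij_betw_imp_inj_on[OF head] by (auto dest: inj_onD)
  have tail_row: "D0 l (\<tau> 7) 1 = 0" "D0 l (\<tau> 7) 2 = 1" "D0 l (\<tau> 7) 3 = 1"
    using tail by (auto simp: D0_def)
  have "7 \<in> {7..6 + l}" using tail by auto
  then have eq: "s 4 * D0 l (\<tau> 4) k = s 1 * D0 l (\<tau> 1) k + s 2 * D0 l (\<tau> 2) k + s 3 * D0 l (\<tau> 3) k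
      \<and> s 5 * D0 l (\<tau> 5) k = s 1 * D0 l (\<tau> 1) k + s 2 * D0 l (\<tau> 2) k
      \<and> s 6 * D0 l (\<tau> 6) k = s 1 * D0 l (\<tau> 1) k + s 3 * D0 l (\<tau> 3) k
      \<and> s 7 * D0 l (\<tau> 7) k = s 2 * D0 l (\<tau> 2) k + s 3 * D0 l (\<tau> 3) k" if "k \<in> {1..3}" for k
    using rels that unfolding lattice_rels_def by auto
  \<comment> \<open>One_nat_def is disabled so that 1 stays a numeral and D0_head_rows keeps matching.\<close>
  show ?thesis
    unfolding map_upt_1_7 head_automorphisms_eq
    apply (insert dist eq[of 1] eq[of 2] eq[of 3] tail_row)
    apply (rule in_1_to_6_cases[OF h(2)]; rule in_1_to_6_cases[OF h(3)];
        rule disjE[OF sg(2)]; rule disjE[OF sg(3)]; rule disjE[OF sg(7)];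
        simp add: D0_head_rows del: One_nat_def;
        rule in_1_to_6_cases[OF h(1)]; rule disjE[OF sg(1)];
        rule in_1_to_6_cases[OF h(5)]; rule disjE[OF sg(5)];
        simp add: D0_head_rows del: One_nat_def;
        rule in_1_to_6_cases[OF h(6)]; rule disjE[OF sg(6)];
        simp add: D0_head_rows del: One_nat_def;
        rule in_1_to_6_cases[OF h(4)]; rule disjE[OF sg(4)];
        simp add: D0_head_rows del: One_nat_def)
    done
qed

lemma signed_perm_factorization:
  assumes "6 \<le> N" and bij: "bij_betw \<tau> {1..N} {1..N}" and tail: "\<tau> ` {7..N} = {7..N}"
    and tail_sign: "\<forall>i\<in>{7..N}. s i = c"
    and coord: "\<forall>v\<in>K0 N. \<forall>j\<in>{1..N}. \<phi> v j = s j * v (\<tau> j)"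
    and K0: "\<forall>v\<in>K0 N. \<phi> v \<in> K0 N"
  shows "\<exists>\<pi>. \<pi> permutes {7..N} \<and>
           (\<forall>v\<in>K0 N. \<phi> v = head_action (map \<tau> [1..<7], map s [1..<7], c) (perm_action \<pi> v))"
proof -
  define \<pi> where "\<pi> = restrict_id \<tau> {7..N}"
  have "bij_betw \<tau> {7..N} {7..N}"
    by (rule bij_betw_subset[OF bij _ tail]) auto
  then have perm: "\<pi> permutes {7..N}"
    unfolding \<pi>_def by (intro bij_imp_permutes bij_betw_restrict_id) auto
  have head: "\<tau> j \<in> {1..6}" if "j \<in> {1..6}" for j
    using head_block_preserved[OF \<open>6 \<le> N\<close> bij tail] that by (rule bij_betw_apply)
  have "\<phi> v = head_action (map \<tau> [1..<7], map s [1..<7], c) (perm_action (inv \<pi>) v)"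
    if v: "v \<in> K0 N" for v
  proof
    fix i
    have inv: "inv (inv \<pi>) = \<pi>" using perm by (simp add: permutes_inv_inv)
    consider "i \<in> {1..6}" | "i \<in> {7..N}" | "i \<notin> {1..N}" by fastforce
    then show "\<phi> v i = head_action (map \<tau> [1..<7], map s [1..<7], c) (perm_action (inv \<pi>) v) i"
    proof cases
      case 1
      then have "\<tau> i \<notin> {7..N}" using head by fastforce
      then have "\<pi> (\<tau> i) = \<tau> i" unfolding \<pi>_def by simp
      then show ?thesis using coord v 1 \<open>6 \<le> N\<close> by (auto simp: perm_action_def inv)
    next
      case 2
      then have "\<pi> i = \<tau> i" unfolding \<pi>_def by simp
      then show ?thesis using coord v tail_sign 2 by (auto simp: perm_action_def inv)
    next
      case 3
      then have "\<pi> i = i" and "\<not> (1 \<le> i \<and> i \<le> 6)" unfolding \<pi>_def using \<open>6 \<le> N\<close> by auto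
      moreover have "v i = 0" and "\<phi> v i = 0" using K0 v 3 unfolding K0_def by auto
      ultimately show ?thesis by (auto simp: perm_action_def inv)
    qed
  qed
  then show ?thesis using permutes_inv[OF perm] by blast
qed

theorem proposition5p1:
  fixes n l :: nat and \<phi> :: "(nat \<Rightarrow> int) \<Rightarrow> (nat \<Rightarrow> int)"
  assumes "n \<ge> 4"
    and "l = 2 ^ (n - 2) - 1"
    and "isometry (6 + l) \<phi>"
    and "\<phi> ` proj_lattice l = proj_lattice l"
  shows "\<exists>g\<in>gen_group. \<exists>\<pi>. \<pi> permutes {7..6 + l} \<and>
           (\<forall>v\<in>K0 (6 + l). \<phi> v = g (perm_action \<pi> v))"
proof -
  have "(2::nat) ^ 2 \<le> 2 ^ (n - 2)" by (rule power_increasing) (use assms(1) in auto)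
  then have "2 \<le> l" using assms(2) by simp
  obtain \<tau> s where bij: "bij_betw \<tau> {1..6 + l} {1..6 + l}"
    and signs: "\<forall>j\<in>{1..6 + l}. s j = 1 \<or> s j = -1"
    and coord: "\<forall>v\<in>K0 (6 + l). \<forall>j\<in>{1..6 + l}. \<phi> v j = s j * v (\<tau> j)"
    using isometry_signed_permutation[OF assms(3)] by blast
  have rels: "\<forall>k\<in>{1..3}. lattice_rels l (\<lambda>i. s i * D0 l (\<tau> i) k)"
    using signed_perm_column_rels[OF coord] assms(4) by blast
  have tail: "\<tau> ` {7..6 + l} = {7..6 + l}" and tail_sign: "\<forall>i\<in>{7..6 + l}. s i = s 7"
    by (rule tail_block_preserved[OF bij \<open>2 \<le> l\<close> signs rels])+
  have "bij_betw \<tau> {1..6} {1..6}" by (rule head_block_preserved[OF _ bij tail]) simp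
  moreover have "\<forall>j\<in>{1..7}. s j = 1 \<or> s j = -1" using signs \<open>2 \<le> l\<close> by simp
  moreover have "\<tau> 7 \<in> {7..6 + l}"
    using tail imageI[of 7 "{7..6 + l}" \<tau>] \<open>2 \<le> l\<close> by simp
  ultimately have "(map \<tau> [1..<7], map s [1..<7], s 7) \<in> set head_automorphisms"
    using rels by (rule head_classification)
  then have "head_action (map \<tau> [1..<7], map s [1..<7], s 7) \<in> gen_group"
    by (rule head_automorphisms_in_gen_group)
  moreover have "\<exists>\<pi>. \<pi> permutes {7..6 + l} \<and>
      (\<forall>v\<in>K0 (6 + l). \<phi> v = head_action (map \<tau> [1..<7], map s [1..<7], s 7) (perm_action \<pi> v))"
    using isometry_K0[OF assms(3)]
    by (intro signed_perm_factorization[OF le_add1 bij tail tail_sign coord]) blast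
  ultimately show ?thesis by blast
qed

end
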